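(* Let $u\in L^2(\mu)$. Suppose that for every continuous $\psi:\Omega\to\mathbb R$ and every $e\in\mathcal B$, setting $v(\omega,e')=\psi(\omega)\delta_{e,e'}$, one has $\int_\Omega u(\omega)\,\nabla^{(\omega)*}v(\omega)\,\mu(d\omega)=0$. Then $u$ is constant $\mu$-almost everywhere.
   Context: $d\ge2$, $c_0>0$, $\mathbb E_d$ the non-oriented nearest-neighbour bonds of $\mathbb Z^d$, $\Omega=[0,c_0]^{\mathbb E_d}$ with product topology, $\omega(x,y)=\omega(\{x,y\})$, $\tau_x\omega(\{y,z\})=\omega(\{y+x,z+x\})$. $\mathbb Q$ is a Borel probability on $\Omega$ invariant and ergodic under $(\tau_x)$, and $\mathbb Q$-a.s. the graph formed by bonds with $\omega(b)>0$ has a unique infinite connected component, with vertex set $\mathcal C(\omega)$. $\mathcal B=\{e\in\mathbb Z^d:|e|=1\}$. $\mu(d\omega)=\mathbb 1_{\{0\in\mathcal C(\omega)\}}\mathbb Q(d\omega)$. $\nabla^{(\omega)*}v(\omega)=\sum_{e\in\mathcal B}\omega(0,e)[v(\omega,e)-v(\tau_e\omega,-e)]$. *)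

theory Defs
  imports "HOL-Analysis.Analysis" "HOL-Probability.Probability"
begin

text \<open>Lattice Z^d is int^'n with CARD('n) = d.
 An environment is a function from sets of sites to reals (only values on bonds matter;
 the configuration space Omega requires value 0 off bonds). Topology: product topology
 on the function space (Function_Topology).\<close>

type_synonym 'n site = "int ^ 'n"
type_synonym 'n env = "'n site set \<Rightarrow> real"

definition unit_dirs :: "('n::finite) site set" where
  "unit_dirs = {axis i s | i s. s = 1 \<or> s = -1}"

definition bonds :: "('n::finite) site set set" where
  "bonds = {{x, x + e} | x e. e \<in> unit_dirs}"

definition Omega :: "real \<Rightarrow> ('n::finite) env set" where
  "Omega c0 = {\<omega>. (\<forall>b\<in>bonds. \<omega> b \<in> {0..c0}) \<and> (\<forall>b. b \<notin> bonds \<longrightarrow> \<omega> b = 0)}"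

definition shift :: "('n::finite) site \<Rightarrow> 'n env \<Rightarrow> 'n env" where
  "shift x \<omega> = (\<lambda>b. \<omega> ((\<lambda>y. y + x) ` b))"

definition open_adj :: "('n::finite) env \<Rightarrow> ('n site \<times> 'n site) set" where
  "open_adj \<omega> = {(x, y). {x, y} \<in> bonds \<and> \<omega> {x, y} > 0}"

definition cluster_of :: "('n::finite) env \<Rightarrow> 'n site \<Rightarrow> 'n site set" where
  "cluster_of \<omega> x = {y. (x, y) \<in> (open_adj \<omega>)\<^sup>*}"

definition unique_infinite_cluster :: "('n::finite) env \<Rightarrow> bool" where
  "unique_infinite_cluster \<omega> \<longleftrightarrow> (\<exists>!K. K \<in> range (cluster_of \<omega>) \<and> infinite K)"

text \<open>Vertex set of the infinite cluster (the union of infinite clusters; a.s. the unique one).\<close>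
definition inf_cluster :: "('n::finite) env \<Rightarrow> 'n site set" where
  "inf_cluster \<omega> = {x. infinite (cluster_of \<omega> x)}"

definition shift_invariant :: "('n::finite) env measure \<Rightarrow> bool" where
  "shift_invariant Q \<longleftrightarrow> (\<forall>x. shift x \<in> measurable Q Q \<and> distr Q Q (shift x) = Q)"

definition shift_ergodic :: "('n::finite) env measure \<Rightarrow> bool" where
  "shift_ergodic Q \<longleftrightarrow> (\<forall>A \<in> sets Q. (\<forall>x. shift x -` A \<inter> space Q = A) \<longrightarrow>
      prob_space.prob Q A = 0 \<or> prob_space.prob Q A = 1)"

definition mu :: "('n::finite) env measure \<Rightarrow> 'n env measure" where
  "mu Q = density Q (\<lambda>\<omega>. indicator {\<omega>. 0 \<in> inf_cluster \<omega>} \<omega>)"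

definition nabla_star :: "(('n::finite) env \<Rightarrow> 'n site \<Rightarrow> real) \<Rightarrow> 'n env \<Rightarrow> real" where
  "nabla_star v \<omega> = (\<Sum>e\<in>unit_dirs. \<omega> {0, e} * (v \<omega> e - v (shift e \<omega>) (- e)))"

end

theory Submission
  imports Defs
begin

text \<open>Testing the hypothesis against \<open>\<psi> \<delta>\<^sub>e\<close> and using stationarity turns it into
  \<open>\<integral> \<psi> \<omega>(0,e) (u \<omega> - u (\<tau>\<^sub>e \<omega>)) dQ = 0\<close> for all bounded continuous \<open>\<psi>\<close>, where \<open>u\<close> is
  extended by \<open>0\<close> off \<open>{0 \<in> \<C>}\<close>. Bounded continuous functions separate integrable densities on a metric space, so
  \<open>u \<circ> \<tau>\<^sub>x\<close> is almost surely constant across every open bond and hence along the whole infinite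
  cluster. The sublevel sets of this common value are shift invariant, so by ergodicity each of
  them is null or conull, which forces \<open>u\<close> to be constant \<open>\<mu>\<close>-almost everywhere.\<close>

section \<open>Annihilation by bounded continuous functions\<close>

lemma set_integral_closed_eq_0_if_continuous_annihilates:
  fixes M :: "'a::metric_space measure" and h :: "'a \<Rightarrow> real"
  assumes sets_M: "sets M = sets borel" and h: "integrable M h"
    and annihilates: "\<And>\<psi>. continuous_on UNIV \<psi> \<Longrightarrow> (\<And>x. \<bar>\<psi> x\<bar> \<le> 1) \<Longrightarrow> (\<integral>x. \<psi> x * h x \<partial>M) = 0"
    and F: "closed F"
  shows "(\<integral>x\<in>F. h x \<partial>M) = 0"
proof (cases "F = {}")
  case False
  define cutoff where "cutoff n x = max 0 (1 - real n * infdist x F)" for n x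
  have [measurable]: "h \<in> borel_measurable M" "F \<in> sets M"
    using h F sets_M by auto
  have cutoff_cont: "continuous_on UNIV (cutoff n)" for n
    unfolding cutoff_def by (intro continuous_intros)
  then have [measurable]: "cutoff n \<in> borel_measurable M" for n
    using borel_measurable_continuous_onI measurable_cong_sets[OF sets_M refl] by blast
  have cutoff_bounded: "\<bar>cutoff n x\<bar> \<le> 1" for n x
    using infdist_nonneg[of x F] by (simp add: cutoff_def)
  have "(\<lambda>n. cutoff n x) \<longlonglongrightarrow> indicator F x" for x
  proof (cases "x \<in> F")
    case True
    then show ?thesis by (simp add: cutoff_def)
  next
    case False
    then have d: "infdist x F > 0"
      using infdist_pos_not_in_closed[OF F \<open>F \<noteq> {}\<close>] by simp
    obtain N :: nat where N: "1 / infdist x F < real N"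
      using reals_Archimedean2 by blast
    have "1 < real n * infdist x F" if "N \<le> n" for n
    proof -
      have "1 / infdist x F < real n"
        using N that by (meson less_le_trans of_nat_le_iff)
      with d show ?thesis by (simp add: field_simps)
    qed
    then have "eventually (\<lambda>n. cutoff n x = indicator F x) sequentially"
      using False unfolding eventually_sequentially cutoff_def by force
    then show ?thesis by (rule tendsto_eventually)
  qed
  then have "(\<lambda>n. \<integral>x. cutoff n x * h x \<partial>M) \<longlonglongrightarrow> (\<integral>x. indicator F x * h x \<partial>M)"
    using cutoff_bounded
    by (intro integral_dominated_convergence[where w="\<lambda>x. \<bar>h x\<bar>"])
       (auto intro!: tendsto_mult h simp: abs_mult mult_left_le_one_le)
  moreover have "(\<integral>x. cutoff n x * h x \<partial>M) = 0" for n
    by (rule annihilates[OF cutoff_cont cutoff_bounded])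
  ultimately show ?thesis
    by (simp add: LIMSEQ_const_iff set_lebesgue_integral_def)
qed (simp add: set_lebesgue_integral_def)

lemma AE_eq_0_if_continuous_annihilates:
  fixes M :: "'a::metric_space measure" and h :: "'a \<Rightarrow> real"
  assumes sets_M: "sets M = sets borel" and h: "integrable M h"
    and annihilates: "\<And>\<psi>. continuous_on UNIV \<psi> \<Longrightarrow> (\<And>x. \<bar>\<psi> x\<bar> \<le> 1) \<Longrightarrow> (\<integral>x. \<psi> x * h x \<partial>M) = 0"
  shows "AE x in M. h x = 0"
proof (rule density_unique_real[OF h integrable_zero])
  note closed_0 = set_integral_closed_eq_0_if_continuous_annihilates[OF sets_M h annihilates]
  have sets_M_closed: "sets M = sigma_sets UNIV (Collect closed)"
    unfolding sets_M borel_eq_closed by (rule sets_measure_of) auto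
  have h_on: "set_integrable M A h" if "A \<in> sets M" for A
    using integrable_mult_indicator[OF that h] by (simp add: set_integrable_def)
  have "Int_stable (Collect closed)" "Collect closed \<subseteq> Pow UNIV"
    by (auto simp: Int_stable_def)
  fix A assume "A \<in> sets M"
  then have "A \<in> sigma_sets UNIV (Collect closed)"
    using sets_M_closed by simp
  with \<open>Int_stable (Collect closed)\<close> \<open>Collect closed \<subseteq> Pow UNIV\<close> have "(\<integral>x\<in>A. h x \<partial>M) = 0"
  proof (induction rule: sigma_sets_induct_disjoint)
    case (compl A)
    then have "A \<in> sets M" "UNIV - A \<in> sets M"
      using sets_M_closed by (simp_all add: sigma_sets.Compl)
    then have "(\<integral>x\<in>UNIV. h x \<partial>M) = (\<integral>x\<in>A. h x \<partial>M) + (\<integral>x\<in>UNIV - A. h x \<partial>M)"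
      using h_on by (subst set_integral_Un[symmetric]) (auto simp: Un_absorb1)
    then show ?case
      using closed_0[of UNIV] compl.IH by simp
  next
    case (union A)
    then have "range A \<subseteq> sets M"
      using sets_M_closed by simp
    then have "(\<integral>x\<in>(\<Union>i. A i). h x \<partial>M) = (\<Sum>i. \<integral>x\<in>A i. h x \<partial>M)"
      using union.hyps h_on by (intro lebesgue_integral_countable_add) (auto simp: disjoint_family_on_def)
    then show ?case using union.IH by simp
  qed (auto simp: closed_0)
  then show "(\<integral>x\<in>A. h x \<partial>M) = (\<integral>x\<in>A. 0 \<partial>M)"
    by (simp add: set_lebesgue_integral_def)
qed

lemma AE_eq_0_if_annihilated_through:
  fixes M :: "'a::topological_space measure" and \<phi> :: "'a \<Rightarrow> 'b::metric_space"
    and g :: "'a \<Rightarrow> real" and h :: "'b \<Rightarrow> real"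
  assumes sets_M: "sets M = sets borel" and \<phi>: "continuous_on UNIV \<phi>" and g: "integrable M g"
    and h: "h \<in> borel_measurable borel" and g_factors: "AE x in M. g x = h (\<phi> x)"
    and annihilates: "\<And>\<psi>. continuous_on UNIV \<psi> \<Longrightarrow> (\<And>y. \<bar>\<psi> y\<bar> \<le> 1) \<Longrightarrow> (\<integral>x. \<psi> (\<phi> x) * g x \<partial>M) = 0"
  shows "AE x in M. g x = 0"
proof -
  have \<phi>_meas [measurable]: "\<phi> \<in> borel_measurable M"
    using borel_measurable_continuous_onI[OF \<phi>] measurable_cong_sets[OF sets_M refl] by blast
  have g_meas [measurable]: "g \<in> borel_measurable M"
    using g by simp
  have [measurable]: "h \<in> borel_measurable borel"
    by (fact h)
  have "AE y in distr M borel \<phi>. h y = 0"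
  proof (rule AE_eq_0_if_continuous_annihilates)
    show "integrable (distr M borel \<phi>) h"
      using integrable_cong_AE_imp[OF g _ g_factors] by (simp add: integrable_distr_eq)
    fix \<psi> :: "'b \<Rightarrow> real"
    assume \<psi>: "continuous_on UNIV \<psi>" "\<And>y. \<bar>\<psi> y\<bar> \<le> 1"
    have [measurable]: "\<psi> \<in> borel_measurable borel"
      using \<psi>(1) by (rule borel_measurable_continuous_onI)
    have "(\<integral>y. \<psi> y * h y \<partial>distr M borel \<phi>) = (\<integral>x. \<psi> (\<phi> x) * h (\<phi> x) \<partial>M)"
      by (rule integral_distr) measurable
    also have "\<dots> = (\<integral>x. \<psi> (\<phi> x) * g x \<partial>M)"
      using g_factors by (intro integral_cong_AE) auto
    finally show "(\<integral>y. \<psi> y * h y \<partial>distr M borel \<phi>) = 0"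
      using annihilates[OF \<psi>] by simp
  qed simp
  then have "AE x in M. h (\<phi> x) = 0"
    by (simp add: AE_distr_iff)
  with g_factors show ?thesis by eventually_elim simp
qed

lemma AE_eq_const_if_threshold_dichotomy:
  fixes u :: "'a \<Rightarrow> real"
  assumes "finite_measure M" and u: "integrable M u"
    and dichotomy: "\<And>t. (AE x in M. u x \<le> t) \<or> (AE x in M. t < u x)"
  shows "\<exists>c. AE x in M. u x = c"
proof (cases "emeasure M (space M) = 0")
  case True
  then show ?thesis by (auto intro: AE_I[where N="space M"])
next
  case False
  interpret finite_measure M by (fact assms(1))
  define c where "c = integral\<^sup>L M u / measure M (space M)"
  have "measure M (space M) > 0"
    using False emeasure_eq_measure measure_nonneg[of M "space M"] by (auto simp: order_le_less)
  then have mean: "integral\<^sup>L M (\<lambda>x. c) = integral\<^sup>L M u"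
    unfolding c_def by simp
  from dichotomy[of c] show ?thesis
  proof
    assume "AE x in M. u x \<le> c"
    moreover have "integral\<^sup>L M (\<lambda>x. c - u x) = 0"
      using mean u by (simp add: Bochner_Integration.integral_diff)
    ultimately have "AE x in M. c - u x = 0"
      using integral_nonneg_eq_0_iff_AE[of M "\<lambda>x. c - u x"] u by (auto elim: AE_mp)
    then have "AE x in M. u x = c" by eventually_elim simp
    then show ?thesis ..
  next
    assume "AE x in M. c < u x"
    then have "integral\<^sup>L M (\<lambda>x. c) < integral\<^sup>L M u"
      using u False by (intro integral_less_AE_space) auto
    with mean show ?thesis by simp
  qed
qed

section \<open>Bonds, shifts and clusters\<close>

lemma finite_unit_dirs: "finite (unit_dirs :: ('n::finite) site set)"
proof -
  have eq: "(unit_dirs :: 'n site set) = (\<lambda>(i, s). axis i s) ` (UNIV \<times> {1, -1 :: int})"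
    unfolding unit_dirs_def by auto
  show ?thesis unfolding eq by (rule finite_imageI) simp
qed

lemma uminus_unit_dirs: "e \<in> unit_dirs \<Longrightarrow> - e \<in> unit_dirs"
  unfolding unit_dirs_def by (auto simp: axis_def vec_eq_iff)

lemma countable_bonds: "countable (bonds :: ('n::finite) site set set)"
proof -
  have eq: "(bonds :: 'n site set set) = (\<lambda>(x, e). {x, x + e}) ` (UNIV \<times> (unit_dirs :: 'n site set))"
    unfolding bonds_def by fastforce
  show ?thesis unfolding eq by (rule countable_image) simp
qed

lemma translate_bond_iff: "{a + x, b + x} \<in> bonds \<longleftrightarrow> {a, b} \<in> bonds"
proof -
  have "{a + x, b + x} \<in> bonds" if "{a, b} \<in> bonds" for a b x :: "'n::finite site"
  proof -
    obtain p e where "{a, b} = {p, p + e}" "e \<in> unit_dirs"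
      using \<open>{a, b} \<in> bonds\<close> unfolding bonds_def by auto
    then have "{a + x, b + x} = {p + x, (p + x) + e}"
      by (auto simp: doubleton_eq_iff algebra_simps)
    with \<open>e \<in> unit_dirs\<close> show ?thesis unfolding bonds_def by auto
  qed
  from this this[of "a + x" "b + x" "- x"] show ?thesis by auto
qed

lemma open_adj_unit_step:
  assumes "(a, b) \<in> open_adj \<omega>"
  obtains e where "e \<in> unit_dirs" "b = a + e" "\<omega> {a, a + e} > 0"
proof -
  from assms have ab: "{a, b} \<in> bonds" "\<omega> {a, b} > 0" by (auto simp: open_adj_def)
  then obtain p e where pe: "{a, b} = {p, p + e}" "e \<in> unit_dirs" unfolding bonds_def by auto
  then consider "a = p" "b = p + e" | "a = p + e" "b = p" by (auto simp: doubleton_eq_iff)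
  then show thesis
  proof cases
    case 1
    then show thesis using that pe ab by auto
  next
    case 2
    then have "b = a + - e" "{a, a + - e} = {a, b}" by auto
    then show thesis using that uminus_unit_dirs[OF pe(2)] ab by metis
  qed
qed

lemma shift_shift: "shift a (shift b \<omega>) = shift (a + b) \<omega>"
  unfolding shift_def by (rule ext) (simp add: image_image add.assoc)

lemma shift_0 [simp]: "shift 0 \<omega> = \<omega>"
  unfolding shift_def by simp

lemma shift_doubleton: "shift x \<omega> {a, b} = \<omega> {a + x, b + x}"
  unfolding shift_def by simp

lemma open_adj_shift: "(a, b) \<in> open_adj (shift x \<omega>) \<longleftrightarrow> (a + x, b + x) \<in> open_adj \<omega>"
  unfolding open_adj_def by (simp add: shift_doubleton translate_bond_iff)

lemma rtrancl_open_adj_shift: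
  "(a, b) \<in> (open_adj (shift x \<omega>))\<^sup>* \<longleftrightarrow> (a + x, b + x) \<in> (open_adj \<omega>)\<^sup>*"
proof -
  have "(a + x, b + x) \<in> (open_adj \<omega>)\<^sup>*" if "(a, b) \<in> (open_adj (shift x \<omega>))\<^sup>*" for a b x \<omega>
    using that
  proof (induction rule: rtrancl_induct)
    case (step y z)
    then show ?case by (meson open_adj_shift rtrancl.rtrancl_into_rtrancl)
  qed simp
  from this this[of "a + x" "b + x" "- x" "shift x \<omega>"] show ?thesis
    by (auto simp: shift_shift)
qed

lemma inf_cluster_shift: "a \<in> inf_cluster (shift x \<omega>) \<longleftrightarrow> a + x \<in> inf_cluster \<omega>"
proof -
  have "cluster_of (shift x \<omega>) a = (\<lambda>y. y - x) ` cluster_of \<omega> (a + x)"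
    unfolding cluster_of_def rtrancl_open_adj_shift
    by (auto simp: image_iff) (metis add_diff_cancel)
  moreover have "inj (\<lambda>y. y - x)" by (auto intro: injI)
  ultimately show ?thesis
    unfolding inf_cluster_def by (simp add: finite_image_iff inj_on_subset[of _ UNIV])
qed

lemma infinite_iff_unbounded_to_nat:
  fixes S :: "'a::countable set"
  shows "infinite S \<longleftrightarrow> (\<forall>n. \<exists>y\<in>S. n \<le> to_nat y)"
proof
  assume "infinite S"
  show "\<forall>n. \<exists>y\<in>S. n \<le> to_nat y"
  proof (rule ccontr)
    assume "\<not> (\<forall>n. \<exists>y\<in>S. n \<le> to_nat y)"
    then obtain n where "S \<subseteq> to_nat -` {..<n}" by (auto simp: not_le)
    moreover have "finite (to_nat -` {..<n} :: 'a set)"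
      by (rule finite_vimageI) (auto simp: inj_to_nat)
    ultimately show False using \<open>infinite S\<close> finite_subset by blast
  qed
next
  assume unbounded: "\<forall>n. \<exists>y\<in>S. n \<le> to_nat y"
  show "infinite S"
  proof
    assume "finite S"
    then obtain m where "\<forall>k\<in>to_nat ` S. k \<le> m"
      using finite_nat_set_iff_bounded_le by blast
    moreover obtain y where "y \<in> S" "Suc m \<le> to_nat y" using unbounded by blast
    ultimately show False by fastforce
  qed
qed

lemma measurable_env_eval [measurable]: "(\<lambda>\<omega>::('n::finite) env. \<omega> b) \<in> borel_measurable borel"
  by (intro borel_measurable_continuous_onI continuous_on_product_coordinates)

lemma sets_open_adj: "{\<omega>::('n::finite) env. (x, y) \<in> open_adj \<omega>} \<in> sets borel"
proof (cases "{x, y} \<in> bonds")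
  case True
  then have "{\<omega>::'n env. (x, y) \<in> open_adj \<omega>} = {\<omega>. 0 < \<omega> {x, y}}"
    by (auto simp: open_adj_def)
  then show ?thesis by simp
qed (simp add: open_adj_def)

lemma sets_rtrancl_open_adj: "{\<omega>::('n::finite) env. (x, y) \<in> (open_adj \<omega>)\<^sup>*} \<in> sets borel"
proof -
  have relpow: "{\<omega>::'n env. (x, y) \<in> open_adj \<omega> ^^ n} \<in> sets borel" for n y
  proof (induction n arbitrary: y)
    case 0
    show ?case by (cases "x = y") auto
  next
    case (Suc n)
    have "{\<omega>::'n env. (x, y) \<in> open_adj \<omega> ^^ Suc n} =
        (\<Union>z. {\<omega>. (x, z) \<in> open_adj \<omega> ^^ n} \<inter> {\<omega>. (z, y) \<in> open_adj \<omega>})"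
      by (auto elim: relpow_Suc_E intro: relpow_Suc_I)
    also have "\<dots> \<in> sets borel"
      using Suc sets_open_adj by (intro sets.countable_UN) auto
    finally show ?case .
  qed
  have "{\<omega>::'n env. (x, y) \<in> (open_adj \<omega>)\<^sup>*} = (\<Union>n. {\<omega>. (x, y) \<in> open_adj \<omega> ^^ n})"
    by (auto simp: rtrancl_power)
  then show ?thesis using relpow by (auto intro: sets.countable_UN)
qed

lemma sets_inf_cluster: "{\<omega>::('n::finite) env. x \<in> inf_cluster \<omega>} \<in> sets borel"
proof -
  have "{\<omega>::'n env. x \<in> inf_cluster \<omega>} =
     (\<Inter>n. \<Union>y. if n \<le> to_nat y then {\<omega>. (x, y) \<in> (open_adj \<omega>)\<^sup>*} else {})"
    unfolding inf_cluster_def cluster_of_def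
    by (subst infinite_iff_unbounded_to_nat) (auto split: if_splits)
  then show ?thesis
    using sets_rtrancl_open_adj by (auto intro!: sets.countable_INT sets.countable_UN)
qed

section \<open>Stationary environments\<close>

text \<open>The environment space is not metrizable, so the annihilation argument runs on the countably
  many bond coordinates, which determine \<open>\<omega>\<close> on \<open>Omega c0\<close>.\<close>

definition bond_coords :: "('n::finite) env \<Rightarrow> nat \<Rightarrow> real" where
  "bond_coords \<omega> n = \<omega> (from_nat_into bonds n)"

definition env_of_coords :: "(nat \<Rightarrow> real) \<Rightarrow> ('n::finite) env" where
  "env_of_coords z b = (if b \<in> bonds then z (to_nat_on bonds b) else 0)"

lemma continuous_on_bond_coords: "continuous_on UNIV (bond_coords :: ('n::finite) env \<Rightarrow> _)"
  unfolding bond_coords_def[abs_def]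
  by (intro continuous_on_coordinatewise_then_product continuous_on_product_coordinates)

lemma measurable_env_of_coords [measurable]:
  "(env_of_coords :: _ \<Rightarrow> ('n::finite) env) \<in> borel_measurable borel"
proof (intro borel_measurable_continuous_onI continuous_on_coordinatewise_then_product)
  fix b :: "'n site set"
  show "continuous_on UNIV (\<lambda>z. env_of_coords z b)"
    unfolding env_of_coords_def by (cases "b \<in> bonds") simp_all
qed

lemma env_of_coords_bond_coords: "\<omega> \<in> Omega c0 \<Longrightarrow> env_of_coords (bond_coords \<omega>) = \<omega>"
  unfolding env_of_coords_def bond_coords_def Omega_def
  by (rule ext) (auto simp: countable_bonds)

lemma abs_bond_le_if_Omega:
  assumes "\<omega> \<in> Omega c0" "e \<in> unit_dirs"
  shows "\<bar>\<omega> {0, e}\<bar> \<le> c0"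
proof -
  have "{0, 0 + e} \<in> bonds" unfolding bonds_def using assms(2) by blast
  then show ?thesis using assms(1) unfolding Omega_def by auto
qed

lemma nabla_star_single_direction:
  assumes e: "e \<in> unit_dirs"
  shows "nabla_star (\<lambda>\<omega>' e'. \<psi> \<omega>' * (if e = e' then 1 else 0)) \<omega>
     = \<omega> {0, e} * \<psi> \<omega> - \<omega> {0, - e} * \<psi> (shift (- e) \<omega>)"
proof -
  have "nabla_star (\<lambda>\<omega>' e'. \<psi> \<omega>' * (if e = e' then 1 else 0)) \<omega>
     = (\<Sum>e'\<in>unit_dirs. if e = e' then \<omega> {0, e'} * \<psi> \<omega> else 0)
       - (\<Sum>e'\<in>unit_dirs. if e' = - e then \<omega> {0, e'} * \<psi> (shift e' \<omega>) else 0)"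
    unfolding nabla_star_def sum_subtractf[symmetric]
    by (intro sum.cong) (auto simp: algebra_simps)
  also have "\<dots> = \<omega> {0, e} * \<psi> \<omega> - \<omega> {0, - e} * \<psi> (shift (- e) \<omega>)"
    using e uminus_unit_dirs[OF e] by (simp add: finite_unit_dirs)
  finally show ?thesis .
qed

locale stationary_environment = prob_space Q for Q :: "('n::finite) env measure" +
  fixes c0 :: real
  assumes sets_Q: "sets Q = sets borel"
    and emeasure_Omega: "emeasure Q (Omega c0) = 1"
    and invariant: "shift_invariant Q"
begin

lemma space_Q: "space Q = UNIV"
  using sets_eq_imp_space_eq[OF sets_Q] by simp

lemma measurable_Q_iff: "measurable Q N = measurable borel N"
  by (rule measurable_cong_sets[OF sets_Q refl])

lemma measurable_eval_Q [measurable]: "(\<lambda>\<omega>. \<omega> b) \<in> borel_measurable Q"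
  unfolding measurable_Q_iff by simp

lemma sets_inf_cluster_Q [measurable]: "{\<omega>. x \<in> inf_cluster \<omega>} \<in> sets Q"
  using sets_inf_cluster sets_Q by simp

lemma measurable_shift [measurable]: "shift x \<in> measurable Q Q"
  using invariant unfolding shift_invariant_def by blast

lemma distr_shift: "distr Q Q (shift x) = Q"
  using invariant unfolding shift_invariant_def by blast

lemma integral_shift:
  fixes f :: "'n env \<Rightarrow> real"
  assumes [measurable]: "f \<in> borel_measurable Q"
  shows "(\<integral>\<omega>. f (shift x \<omega>) \<partial>Q) = (\<integral>\<omega>. f \<omega> \<partial>Q)"
  using integral_distr[of "shift x" Q Q f] distr_shift by simp

lemma integrable_shift:
  fixes f :: "'n env \<Rightarrow> real"
  assumes [measurable]: "f \<in> borel_measurable Q" and "integrable Q f"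
  shows "integrable Q (\<lambda>\<omega>. f (shift x \<omega>))"
  using integrable_distr_eq[of "shift x" Q Q f] distr_shift assms(2) by simp

lemma AE_shift:
  assumes "{\<omega>. P \<omega>} \<in> sets Q" and "AE \<omega> in Q. P \<omega>"
  shows "AE \<omega> in Q. P (shift x \<omega>)"
proof -
  have "AE \<omega> in distr Q Q (shift x). P \<omega>"
    by (subst distr_shift) (fact assms(2))
  then show ?thesis
    using assms(1) space_Q by (subst (asm) AE_distr_iff[OF measurable_shift]) simp_all
qed

lemma AE_Omega: "AE \<omega> in Q. \<omega> \<in> Omega c0"
  using emeasure_Omega by (intro AE_prob_1) (simp add: measure_def)

lemma integrable_bond_mult:
  assumes f: "integrable Q f" and e: "e \<in> unit_dirs"
    and [measurable]: "k \<in> borel_measurable Q" and k: "\<And>\<omega>. \<bar>k \<omega>\<bar> \<le> 1"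
  shows "integrable Q (\<lambda>\<omega>. \<omega> {0, e} * k \<omega> * f \<omega>)"
proof (rule Bochner_Integration.integrable_bound)
  show "integrable Q (\<lambda>\<omega>. c0 * f \<omega>)"
    using f by simp
  show "(\<lambda>\<omega>. \<omega> {0, e} * k \<omega> * f \<omega>) \<in> borel_measurable Q"
    using f by measurable
  show "AE \<omega> in Q. norm (\<omega> {0, e} * k \<omega> * f \<omega>) \<le> norm (c0 * f \<omega>)"
    using AE_Omega
  proof eventually_elim
    case (elim \<omega>)
    have "\<bar>\<omega> {0, e}\<bar> \<le> c0"
      using elim e by (rule abs_bond_le_if_Omega)
    then have "\<bar>\<omega> {0, e} * k \<omega>\<bar> \<le> c0"
      using k[of \<omega>] mult_right_le_one_le[of "\<bar>\<omega> {0, e}\<bar>" "\<bar>k \<omega>\<bar>"] by (simp add: abs_mult)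
    then show ?case
      by (simp add: abs_mult mult_right_mono)
  qed
qed

lemma sets_mu: "sets (mu Q) = sets Q"
  unfolding mu_def by simp

lemma integral_mu:
  fixes f :: "'n env \<Rightarrow> real"
  assumes [measurable]: "f \<in> borel_measurable Q"
  shows "(\<integral>\<omega>. f \<omega> \<partial>mu Q) = (\<integral>\<omega>. indicator {\<omega>. 0 \<in> inf_cluster \<omega>} \<omega> * f \<omega> \<partial>Q)"
  unfolding mu_def ennreal_indicator[symmetric] by (subst integral_density) auto

lemma integrable_mu_iff:
  fixes f :: "'n env \<Rightarrow> real"
  assumes [measurable]: "f \<in> borel_measurable Q"
  shows "integrable (mu Q) f \<longleftrightarrow> integrable Q (\<lambda>\<omega>. indicator {\<omega>. 0 \<in> inf_cluster \<omega>} \<omega> * f \<omega>)"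
  unfolding mu_def ennreal_indicator[symmetric] by (subst integrable_density) auto

lemma AE_mu_iff: "(AE \<omega> in mu Q. P \<omega>) \<longleftrightarrow> (AE \<omega> in Q. 0 \<in> inf_cluster \<omega> \<longrightarrow> P \<omega>)"
  unfolding mu_def by (subst AE_density) (auto simp: indicator_def)

lemma finite_measure_mu: "finite_measure (mu Q)"
proof (rule finite_measureI)
  have "emeasure (mu Q) (space (mu Q)) = (\<integral>\<^sup>+\<omega>. indicator {\<omega>. 0 \<in> inf_cluster \<omega>} \<omega> \<partial>Q)"
    unfolding mu_def by (subst emeasure_density) (auto intro!: nn_integral_cong)
  also have "\<dots> \<le> (\<integral>\<^sup>+\<omega>. 1 \<partial>Q)"
    by (intro nn_integral_mono) (simp add: indicator_def)
  finally show "emeasure (mu Q) (space (mu Q)) \<noteq> \<infinity>"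
    using emeasure_space_1 by (auto simp: top_unique)
qed

end

section \<open>Constancy along the infinite cluster\<close>

locale nabla_star_orthogonal = stationary_environment Q c0 for Q :: "('n::finite) env measure" and c0 +
  fixes u :: "'n env \<Rightarrow> real"
  assumes measurable_u: "u \<in> borel_measurable (mu Q)"
    and square_integrable_u: "integrable (mu Q) (\<lambda>\<omega>. (u \<omega>)\<^sup>2)"
    and orthogonal: "\<And>\<psi> e. continuous_on (Omega c0) \<psi> \<Longrightarrow> e \<in> unit_dirs \<Longrightarrow>
           (\<integral>\<omega>. u \<omega> * nabla_star (\<lambda>\<omega>' e'. \<psi> \<omega>' * (if e = e' then 1 else 0)) \<omega> \<partial>mu Q) = 0"
begin

lemma measurable_u_Q [measurable]: "u \<in> borel_measurable Q"
  using measurable_u measurable_cong_sets[OF sets_mu refl] by blast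

text \<open>Extending \<open>u\<close> by \<open>0\<close> off \<open>{0 \<in> \<C>}\<close> turns integrals against \<open>mu Q\<close> into integrals against
  the stationary measure \<open>Q\<close>.\<close>

definition u_cl :: "'n env \<Rightarrow> real" where
  "u_cl \<omega> = indicator {\<omega>. 0 \<in> inf_cluster \<omega>} \<omega> * u \<omega>"

lemma measurable_u_cl [measurable]: "u_cl \<in> borel_measurable Q"
  unfolding u_cl_def by measurable

lemma integrable_u_cl: "integrable Q u_cl"
proof (rule square_integrable_imp_integrable[OF measurable_u_cl])
  have "integrable Q (\<lambda>\<omega>. indicator {\<omega>. 0 \<in> inf_cluster \<omega>} \<omega> * (u \<omega>)\<^sup>2)"
    using square_integrable_u by (subst (asm) integrable_mu_iff) auto
  moreover have "(u_cl \<omega>)\<^sup>2 = indicator {\<omega>. 0 \<in> inf_cluster \<omega>} \<omega> * (u \<omega>)\<^sup>2" for \<omega>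
    by (simp add: u_cl_def indicator_def)
  ultimately show "integrable Q (\<lambda>\<omega>. (u_cl \<omega>)\<^sup>2)"
    by simp
qed

lemma integral_bond_difference_eq_0:
  fixes \<psi> :: "'n env \<Rightarrow> real"
  assumes e: "e \<in> unit_dirs" and \<psi>: "continuous_on UNIV \<psi>" "\<And>\<omega>. \<bar>\<psi> \<omega>\<bar> \<le> 1"
  shows "(\<integral>\<omega>. \<psi> \<omega> * (\<omega> {0, e} * (u_cl \<omega> - u_cl (shift e \<omega>))) \<partial>Q) = 0"
proof -
  have [measurable]: "\<psi> \<in> borel_measurable Q"
    unfolding measurable_Q_iff using \<psi>(1) by (rule borel_measurable_continuous_onI)
  define A where "A \<omega> = \<omega> {0, e} * \<psi> \<omega> * u_cl \<omega>" for \<omega>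
  define B where "B \<omega> = \<omega> {0, - e} * \<psi> (shift (- e) \<omega>) * u_cl \<omega>" for \<omega>
  define B' where "B' \<omega> = \<omega> {0, e} * \<psi> \<omega> * u_cl (shift e \<omega>)" for \<omega>
  have int_A: "integrable Q A"
    unfolding A_def by (rule integrable_bond_mult[OF integrable_u_cl e _ \<psi>(2)]) measurable
  have int_B: "integrable Q B"
    unfolding B_def
    by (rule integrable_bond_mult[OF integrable_u_cl uminus_unit_dirs[OF e] _ \<psi>(2)]) measurable
  have int_B': "integrable Q B'"
    unfolding B'_def
    by (rule integrable_bond_mult[OF integrable_shift[OF measurable_u_cl integrable_u_cl] e _ \<psi>(2)])
      measurable
  have "(\<integral>\<omega>. u \<omega> * nabla_star (\<lambda>\<omega>' e'. \<psi> \<omega>' * (if e = e' then 1 else 0)) \<omega> \<partial>mu Q)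
      = (\<integral>\<omega>. A \<omega> - B \<omega> \<partial>Q)"
    by (simp add: nabla_star_single_direction[OF e] integral_mu A_def B_def u_cl_def algebra_simps)
  then have "integral\<^sup>L Q A = integral\<^sup>L Q B"
    using orthogonal[OF continuous_on_subset[OF \<psi>(1)] e] int_A int_B by simp
  \<comment> \<open>stationarity moves the shift in the second term of \<open>nabla_star\<close> from \<open>\<psi>\<close> onto \<open>u_cl\<close>\<close>
  also have "\<dots> = (\<integral>\<omega>. B (shift e \<omega>) \<partial>Q)"
    using int_B by (simp add: integral_shift)
  also have "\<dots> = integral\<^sup>L Q B'"
    unfolding B_def B'_def by (simp add: shift_doubleton shift_shift insert_commute)
  finally have "integral\<^sup>L Q A = integral\<^sup>L Q B'" .
  moreover have "(\<integral>\<omega>. \<psi> \<omega> * (\<omega> {0, e} * (u_cl \<omega> - u_cl (shift e \<omega>))) \<partial>Q) = (\<integral>\<omega>. A \<omega> - B' \<omega> \<partial>Q)"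
    unfolding A_def B'_def by (simp add: algebra_simps)
  ultimately show ?thesis
    using int_A int_B' by simp
qed

lemma AE_bond_difference_eq_0:
  assumes e: "e \<in> unit_dirs"
  shows "AE \<omega> in Q. \<omega> {0, e} * (u_cl \<omega> - u_cl (shift e \<omega>)) = 0"
proof -
  define g where "g \<omega> = \<omega> {0, e} * (u_cl \<omega> - u_cl (shift e \<omega>))" for \<omega>
  have g_meas [measurable]: "g \<in> borel_measurable Q"
    unfolding g_def by measurable
  have "integrable Q g"
    using integrable_bond_mult[OF integrable_u_cl e, of "\<lambda>_. 1"]
      integrable_bond_mult[OF integrable_shift[OF measurable_u_cl integrable_u_cl] e, of "\<lambda>_. 1"]
    unfolding g_def by (simp add: right_diff_distrib)
  moreover have "g \<circ> env_of_coords \<in> borel_measurable borel"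
    using g_meas unfolding measurable_Q_iff by simp
  moreover have "AE \<omega> in Q. g \<omega> = (g \<circ> env_of_coords) (bond_coords \<omega>)"
    using AE_Omega by eventually_elim (simp add: env_of_coords_bond_coords)
  ultimately have "AE \<omega> in Q. g \<omega> = 0"
  proof (rule AE_eq_0_if_annihilated_through[OF sets_Q continuous_on_bond_coords])
    fix \<psi> :: "(nat \<Rightarrow> real) \<Rightarrow> real"
    assume "continuous_on UNIV \<psi>" "\<And>y. \<bar>\<psi> y\<bar> \<le> 1"
    then show "(\<integral>\<omega>. \<psi> (bond_coords \<omega>) * g \<omega> \<partial>Q) = 0"
      unfolding g_def
      by (intro integral_bond_difference_eq_0 e continuous_on_compose2[OF _ continuous_on_bond_coords]) auto
  qed
  then show ?thesis
    unfolding g_def .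
qed

lemma AE_u_cl_open_bond:
  assumes e: "e \<in> unit_dirs"
  shows "AE \<omega> in Q. 0 < \<omega> {x, x + e} \<longrightarrow> u_cl (shift x \<omega>) = u_cl (shift (x + e) \<omega>)"
proof -
  have "{\<omega>. 0 < \<omega> {0, e} \<longrightarrow> u_cl \<omega> = u_cl (shift e \<omega>)} =
      {\<omega> \<in> space Q. \<omega> {0, e} \<le> 0} \<union> {\<omega> \<in> space Q. u_cl \<omega> = u_cl (shift e \<omega>)}"
    by (auto simp: space_Q)
  also have "\<dots> \<in> sets Q"
    by measurable
  finally have "{\<omega>. 0 < \<omega> {0, e} \<longrightarrow> u_cl \<omega> = u_cl (shift e \<omega>)} \<in> sets Q" .
  moreover have "AE \<omega> in Q. 0 < \<omega> {0, e} \<longrightarrow> u_cl \<omega> = u_cl (shift e \<omega>)"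
    using AE_bond_difference_eq_0[OF e] by eventually_elim auto
  ultimately have "AE \<omega> in Q. 0 < shift x \<omega> {0, e} \<longrightarrow> u_cl (shift x \<omega>) = u_cl (shift e (shift x \<omega>))"
    by (rule AE_shift)
  then show ?thesis
    by eventually_elim (simp add: shift_doubleton shift_shift ac_simps)
qed

lemma AE_u_cl_const_on_open_paths:
  "AE \<omega> in Q. \<forall>a b. (a, b) \<in> (open_adj \<omega>)\<^sup>* \<longrightarrow> u_cl (shift a \<omega>) = u_cl (shift b \<omega>)"
proof -
  have "AE \<omega> in Q. e \<in> unit_dirs \<longrightarrow> 0 < \<omega> {x, x + e} \<longrightarrow> u_cl (shift x \<omega>) = u_cl (shift (x + e) \<omega>)"
    for x e by (cases "e \<in> unit_dirs") (simp_all add: AE_u_cl_open_bond)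
  then have "AE \<omega> in Q. \<forall>x e. e \<in> unit_dirs \<longrightarrow> 0 < \<omega> {x, x + e} \<longrightarrow> u_cl (shift x \<omega>) = u_cl (shift (x + e) \<omega>)"
    by (simp add: AE_all_countable)
  then show ?thesis
  proof eventually_elim
    case (elim \<omega>)
    show ?case
    proof (intro allI impI)
      fix a b
      assume "(a, b) \<in> (open_adj \<omega>)\<^sup>*"
      then show "u_cl (shift a \<omega>) = u_cl (shift b \<omega>)"
      proof (induction rule: rtrancl_induct)
        case (step y z)
        then obtain e where "e \<in> unit_dirs" "z = y + e" "0 < \<omega> {y, y + e}"
          by (auto elim: open_adj_unit_step)
        with step.IH elim show ?case by simp
      qed simp
    qed
  qed
qed

text \<open>Where \<open>u_cl \<circ> shift x\<close> is constant along open paths, \<open>\<omega> \<in> cluster_sublevel t\<close> says that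
  its common value on the infinite cluster is at most \<open>t\<close>; unlike \<open>{u \<le> t}\<close>, this set is shift
  invariant.\<close>

definition cluster_sublevel :: "real \<Rightarrow> 'n env set" where
  "cluster_sublevel t = {\<omega>. \<exists>x\<in>inf_cluster \<omega>. u_cl (shift x \<omega>) \<le> t}"

lemma sets_cluster_sublevel: "cluster_sublevel t \<in> sets Q"
proof -
  have "cluster_sublevel t = (\<Union>x. {\<omega>. x \<in> inf_cluster \<omega>} \<inter> {\<omega> \<in> space Q. u_cl (shift x \<omega>) \<le> t})"
    unfolding cluster_sublevel_def by (auto simp: space_Q)
  also have "\<dots> \<in> sets Q"
    by measurable
  finally show ?thesis .
qed

lemma shift_cluster_sublevel: "shift y \<omega> \<in> cluster_sublevel t \<longleftrightarrow> \<omega> \<in> cluster_sublevel t"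
proof
  assume "shift y \<omega> \<in> cluster_sublevel t"
  then obtain x where "x \<in> inf_cluster (shift y \<omega>)" "u_cl (shift x (shift y \<omega>)) \<le> t"
    unfolding cluster_sublevel_def by blast
  then have "x + y \<in> inf_cluster \<omega>" "u_cl (shift (x + y) \<omega>) \<le> t"
    by (simp_all add: inf_cluster_shift shift_shift)
  then show "\<omega> \<in> cluster_sublevel t"
    unfolding cluster_sublevel_def by blast
next
  assume "\<omega> \<in> cluster_sublevel t"
  then obtain x where "x \<in> inf_cluster \<omega>" "u_cl (shift x \<omega>) \<le> t"
    unfolding cluster_sublevel_def by blast
  then have "x - y \<in> inf_cluster (shift y \<omega>)" "u_cl (shift (x - y) (shift y \<omega>)) \<le> t"
    by (simp_all add: inf_cluster_shift shift_shift)
  then show "shift y \<omega> \<in> cluster_sublevel t"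
    unfolding cluster_sublevel_def by blast
qed

end

section \<open>Ergodicity\<close>

locale ergodic_nabla_star_orthogonal = nabla_star_orthogonal Q c0 u
  for Q :: "('n::finite) env measure" and c0 u +
  assumes ergodic: "shift_ergodic Q"
    and unique_cluster: "AE \<omega> in Q. unique_infinite_cluster \<omega>"
begin

lemma AE_cluster_sublevel_iff:
  "AE \<omega> in Q. 0 \<in> inf_cluster \<omega> \<longrightarrow> (\<omega> \<in> cluster_sublevel t \<longleftrightarrow> u \<omega> \<le> t)"
  using AE_u_cl_const_on_open_paths unique_cluster
proof eventually_elim
  case (elim \<omega>)
  show ?case
  proof
    assume "0 \<in> inf_cluster \<omega>"
    then have u_eq: "u_cl \<omega> = u \<omega>"
      by (simp add: u_cl_def)
    have "(0, x) \<in> (open_adj \<omega>)\<^sup>*" if "x \<in> inf_cluster \<omega>" for x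
    proof -
      obtain K where "\<And>K'. K' \<in> range (cluster_of \<omega>) \<and> infinite K' \<Longrightarrow> K' = K"
        using elim(2) unfolding unique_infinite_cluster_def by (auto elim!: ex1E)
      then have "cluster_of \<omega> x = cluster_of \<omega> 0"
        using \<open>0 \<in> inf_cluster \<omega>\<close> that unfolding inf_cluster_def
        by (metis (mono_tags) mem_Collect_eq rangeI)
      moreover have "x \<in> cluster_of \<omega> x"
        unfolding cluster_of_def by simp
      ultimately show ?thesis
        unfolding cluster_of_def by simp
    qed
    with elim(1) have "u_cl (shift x \<omega>) = u \<omega>" if "x \<in> inf_cluster \<omega>" for x
      using that u_eq by (metis shift_0)
    then show "\<omega> \<in> cluster_sublevel t \<longleftrightarrow> u \<omega> \<le> t"
      using \<open>0 \<in> inf_cluster \<omega>\<close> unfolding cluster_sublevel_def by auto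
  qed
qed

lemma AE_mu_threshold_dichotomy: "(AE \<omega> in mu Q. u \<omega> \<le> t) \<or> (AE \<omega> in mu Q. t < u \<omega>)"
proof -
  have "prob (cluster_sublevel t) = 0 \<or> prob (cluster_sublevel t) = 1"
    using ergodic sets_cluster_sublevel shift_cluster_sublevel space_Q
    unfolding shift_ergodic_def by (simp add: vimage_def)
  then show ?thesis
  proof
    assume "prob (cluster_sublevel t) = 0"
    then have "AE \<omega> in Q. \<omega> \<notin> cluster_sublevel t"
      using prob_eq_0[OF sets_cluster_sublevel] by simp
    with AE_cluster_sublevel_iff[of t] have "AE \<omega> in mu Q. t < u \<omega>"
      unfolding AE_mu_iff by eventually_elim auto
    then show ?thesis ..
  next
    assume "prob (cluster_sublevel t) = 1"
    then have "AE \<omega> in Q. \<omega> \<in> cluster_sublevel t"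
      by (rule AE_prob_1)
    with AE_cluster_sublevel_iff[of t] have "AE \<omega> in mu Q. u \<omega> \<le> t"
      unfolding AE_mu_iff by eventually_elim auto
    then show ?thesis ..
  qed
qed

theorem AE_u_eq_const: "\<exists>c. AE \<omega> in mu Q. u \<omega> = c"
proof (rule AE_eq_const_if_threshold_dichotomy[OF finite_measure_mu _ AE_mu_threshold_dichotomy])
  show "integrable (mu Q) u"
    using finite_measure.square_integrable_imp_integrable[OF finite_measure_mu measurable_u
        square_integrable_u] .
qed

end

theorem mainTheorem7:
  fixes Q :: "('n::finite) env measure" and c0 :: real and u :: "'n env \<Rightarrow> real"
  assumes "CARD('n) \<ge> 2"
    and "c0 > 0"
    and "prob_space Q"
    and "sets Q = sets borel"
    and "emeasure Q (Omega c0) = 1"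
    and "shift_invariant Q"
    and "shift_ergodic Q"
    and "AE \<omega> in Q. unique_infinite_cluster \<omega>"
    and "u \<in> borel_measurable (mu Q)"
    and "integrable (mu Q) (\<lambda>\<omega>. (u \<omega>)\<^sup>2)"
    and "\<And>\<psi> e. continuous_on (Omega c0) \<psi> \<Longrightarrow> e \<in> unit_dirs \<Longrightarrow>
           integral\<^sup>L (mu Q) (\<lambda>\<omega>. u \<omega> * nabla_star (\<lambda>\<omega>' e'. \<psi> \<omega>' * (if e = e' then 1 else 0)) \<omega>) = 0"
  shows "\<exists>c. AE \<omega> in mu Q. u \<omega> = c"
proof -
  interpret ergodic_nabla_star_orthogonal Q c0 u
    using assms(3-)
    by (intro ergodic_nabla_star_orthogonal.intro nabla_star_orthogonal.intro
        stationary_environment.intro ergodic_nabla_star_orthogonal_axioms.intro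
        nabla_star_orthogonal_axioms.intro stationary_environment_axioms.intro) auto
  show ?thesis
    by (rule AE_u_eq_const)
qed

end
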